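(* Let $n$ be a positive integer and $m=n+1$. Then for every zero-normalized $\Gamma_{m,n}$-semimodule $\Delta$, the Young diagrams $G_{n+1}(\Delta)$ and $G_n(\Delta)$ coincide (as partitions, i.e. ignoring columns of height zero).
   Context: Let $m,n$ be coprime positive integers and $\Gamma=\{am+bn:a,b\in\mathbb{Z}_{\ge0}\}$. A $\Gamma$-semimodule is $\Delta\subset\mathbb{Z}_{\ge0}$ with $\Delta+\Gamma\subset\Delta$; zero-normalized means $\min\Delta=0$. For $p\in\{m,n\}$, a $p$-generator of $\Delta$ is $a\in\Delta$ with $a-p\notin\Delta$; there are exactly $p$ of them. With $a_1<\dots<a_m$ the $m$-generators and $b_1<\dots<b_n$ the $n$-generators, put $g_m(x)=\#(([x,x+n)\cap\mathbb{Z})\setminus\Delta)$, $g_n(x)=\#(([x,x+m)\cap\mathbb{Z})\setminus\Delta)$. $G_m(\Delta)$ is the Young diagram with column heights $g_m(a_1)\ge\dots\ge g_m(a_m)$, and $G_n(\Delta)$ is the Young diagram with column heights $g_n(b_1)\ge\dots\ge g_n(b_n)$. *)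

theory Defs
  imports Main
begin

definition semigroup_gen :: "nat \<Rightarrow> nat \<Rightarrow> nat set" where
  "semigroup_gen m n = {a * m + b * n | a b. True}"

definition is_semimodule :: "nat \<Rightarrow> nat \<Rightarrow> nat set \<Rightarrow> bool" where
  "is_semimodule m n D \<longleftrightarrow> (\<forall>x\<in>D. \<forall>g\<in>semigroup_gen m n. x + g \<in> D)"

definition zero_normalized :: "nat set \<Rightarrow> bool" where
  "zero_normalized D \<longleftrightarrow> D \<noteq> {} \<and> (LEAST x. x \<in> D) = 0"

definition generators :: "nat set \<Rightarrow> nat \<Rightarrow> nat set" where
  "generators D p = {a \<in> D. int a - int p \<notin> int ` D}"

definition gap_count :: "nat set \<Rightarrow> nat \<Rightarrow> nat \<Rightarrow> nat" where
  "gap_count D L x = card ({x..<x+L} - D)"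

text \<open>Young diagram with column heights gap_count D L a over the p-generators a,
  represented as the weakly decreasing list of its column heights.\<close>
definition young_diagram :: "nat set \<Rightarrow> nat \<Rightarrow> nat \<Rightarrow> nat list" where
  "young_diagram D p L = rev (sort (map (gap_count D L) (sorted_list_of_set (generators D p))))"

definition G_m :: "nat \<Rightarrow> nat \<Rightarrow> nat set \<Rightarrow> nat list" where
  "G_m m n D = young_diagram D m n"

definition G_n :: "nat \<Rightarrow> nat \<Rightarrow> nat set \<Rightarrow> nat list" where
  "G_n m n D = young_diagram D n m"

definition partition_of :: "nat list \<Rightarrow> nat list" where
  "partition_of hs = filter (\<lambda>h. 0 < h) hs"

end

theory Submission
  imports Defs "HOL-Library.Multiset"
begin

text \<open>Let \<open>h x\<close> be the number of gaps of \<open>\<Delta>\<close> in \<open>[x, x + n)\<close>. For an \<open>n\<close>-generator \<open>b\<close>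
  the window \<open>[b, b + n + 1)\<close> has the same gaps because \<open>b + n \<in> \<Delta>\<close>, so both diagrams have
  column heights given by \<open>h\<close>. As \<open>\<Delta> + n \<subseteq> \<Delta>\<close>, \<open>h\<close> is weakly decreasing, and it can only
  grow when the window moves past an element of \<open>\<Delta>\<close>; hence every superlevel set
  \<open>{h \<ge> k}\<close>, \<open>k \<ge> 1\<close>, is an interval \<open>[0, T)\<close> with \<open>T - 1\<close> a gap. Splitting \<open>\<Delta> \<inter> [0, T)\<close>
  into \<open>p\<close>-generators and \<open>\<Delta> + p\<close> for \<open>p = n\<close> and \<open>p = n + 1\<close>, the shifted parts have the
  same size because \<open>T - 1 \<notin> \<Delta>\<close>, so both kinds of generators below \<open>T\<close> are equinumerous.\<close>

lemma generators_eq: "generators D p = {a \<in> D. \<not> (p \<le> a \<and> a - p \<in> D)}"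
proof -
  have "int a - int p \<in> int ` D \<longleftrightarrow> p \<le> a \<and> a - p \<in> D" for a
  proof
    assume "int a - int p \<in> int ` D"
    then obtain d where "d \<in> D" "int a - int p = int d" by auto
    then show "p \<le> a \<and> a - p \<in> D" by (metis add_diff_cancel_right' diff_add_cancel le_add2 nat_int of_nat_add)
  next
    assume "p \<le> a \<and> a - p \<in> D"
    then show "int a - int p \<in> int ` D" by (metis image_eqI of_nat_diff)
  qed
  then show ?thesis unfolding generators_def by auto
qed

lemma finite_generators:
  assumes "finite (- D)"
  shows "finite (generators D p)"
proof (rule finite_subset)
  show "generators D p \<subseteq> {..<p} \<union> (\<lambda>z. z + p) ` (- D)"
  proof
    fix a assume "a \<in> generators D p"
    then have "a < p \<or> a - p \<in> - D \<and> a = (a - p) + p"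
      unfolding generators_eq by auto
    then show "a \<in> {..<p} \<union> (\<lambda>z. z + p) ` (- D)" by blast
  qed
qed (use assms in simp)

lemma card_below_eq_generators_plus_shift:
  assumes "\<forall>x\<in>D. x + p \<in> D"
  shows "card {x \<in> D. x < T} = card {a \<in> generators D p. a < T} + card {x \<in> D. x + p < T}"
proof -
  have split: "{x \<in> D. x < T} = {a \<in> generators D p. a < T} \<union> (\<lambda>x. x + p) ` {x \<in> D. x + p < T}"
    unfolding generators_eq using assms by (auto simp: image_iff) (metis le_add_diff_inverse2)
  have disjoint: "{a \<in> generators D p. a < T} \<inter> (\<lambda>x. x + p) ` {x \<in> D. x + p < T} = {}"
    unfolding generators_eq by auto
  have "finite {a \<in> generators D p. a < T}" "finite {x \<in> D. x + p < T}"
    by (auto intro: finite_subset[of _ "{..<T}"])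
  then show ?thesis
    unfolding split by (simp add: card_Un_disjoint[OF _ _ disjoint] card_image inj_on_def)
qed

lemma card_generators_below_eq:
  assumes "\<forall>x\<in>D. x + n \<in> D" "\<forall>x\<in>D. x + (n + 1) \<in> D" and "T = 0 \<or> T - 1 \<notin> D"
  shows "card {a \<in> generators D (n + 1). a < T} = card {b \<in> generators D n. b < T}"
proof -
  have "{x \<in> D. x + n < T} = {x \<in> D. x + (n + 1) < T}"
  proof (cases "T = 0")
    case False
    with assms have "x \<in> D \<Longrightarrow> x + n \<noteq> T - 1" for x by auto
    with False show ?thesis by fastforce
  qed simp
  then show ?thesis
    using card_below_eq_generators_plus_shift[OF assms(1), of T]
      card_below_eq_generators_plus_shift[OF assms(2), of T] by simp
qed

lemma gap_count_Suc_le: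
  assumes "\<forall>x\<in>D. x + L \<in> D"
  shows "gap_count D L (Suc y) \<le> gap_count D L y"
proof -
  let ?g = "\<lambda>z. if z = y + L then y else z"
  have "inj_on ?g ({Suc y..<Suc y + L} - D)" unfolding inj_on_def by auto
  moreover have "?g ` ({Suc y..<Suc y + L} - D) \<subseteq> {y..<y + L} - D"
  proof (rule image_subsetI)
    fix z assume z: "z \<in> {Suc y..<Suc y + L} - D"
    show "?g z \<in> {y..<y + L} - D"
    proof (cases "z = y + L")
      case True
      with z assms have "y \<notin> D" by auto
      with z True show ?thesis by auto
    qed (use z in auto)
  qed
  ultimately show ?thesis
    unfolding gap_count_def by (rule card_inj_on_le) simp
qed

lemma gap_count_antimono:
  assumes "\<forall>x\<in>D. x + L \<in> D" and "y \<le> x"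
  shows "gap_count D L x \<le> gap_count D L y"
  using lift_Suc_antimono_le[of "gap_count D L", OF gap_count_Suc_le[OF assms(1)] assms(2)] .

lemma gap_count_le_Suc_if_mem:
  assumes "y \<in> D"
  shows "gap_count D L y \<le> gap_count D L (Suc y)"
proof -
  from assms have "{y..<y + L} - D \<subseteq> {Suc y..<Suc y + L} - D"
    by (auto simp: Suc_le_eq order_le_less)
  then show ?thesis unfolding gap_count_def by (intro card_mono) auto
qed

lemma gap_count_Suc_window:
  assumes "x + L \<in> D"
  shows "gap_count D (Suc L) x = gap_count D L x"
proof -
  from assms have "{x..<x + Suc L} - D = {x..<x + L} - D" by (auto simp: less_Suc_eq)
  then show ?thesis unfolding gap_count_def by simp
qed

lemma finite_gap_count_ge:
  assumes "finite (- D)" and "0 < k"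
  shows "finite {x. k \<le> gap_count D L x}"
proof (rule finite_subset)
  show "{x. k \<le> gap_count D L x} \<subseteq> (\<Union>z\<in>- D. {..z})"
  proof
    fix x assume "x \<in> {x. k \<le> gap_count D L x}"
    with \<open>0 < k\<close> have "{x..<x + L} - D \<noteq> {}"
      unfolding gap_count_def by (intro notI) simp
    then show "x \<in> (\<Union>z\<in>- D. {..z})" by auto
  qed
qed (use assms(1) in simp)

lemma gap_count_ge_eq_lessThan:
  assumes "\<forall>x\<in>D. x + L \<in> D" and "finite (- D)" and "0 < k"
  obtains T where "{x. k \<le> gap_count D L x} = {..<T}" and "T = 0 \<or> T - 1 \<notin> D"
proof (cases "{x. k \<le> gap_count D L x} = {}")
  case True
  then show ?thesis using that[of 0] by simp
next
  case False
  let ?U = "{x. k \<le> gap_count D L x}"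
  have fin: "finite ?U" using finite_gap_count_ge[OF assms(2,3)] .
  define M where "M = Max ?U"
  have "M \<in> ?U" unfolding M_def using Max_in[OF fin False] .
  have U: "?U = {..<Suc M}"
  proof (intro set_eqI iffI)
    fix x assume "x \<in> ?U"
    then have "x \<le> M" unfolding M_def by (rule Max_ge[OF fin])
    then show "x \<in> {..<Suc M}" by simp
  next
    fix x assume "x \<in> {..<Suc M}"
    then have "gap_count D L M \<le> gap_count D L x"
      by (intro gap_count_antimono[OF assms(1)]) simp
    with \<open>M \<in> ?U\<close> show "x \<in> ?U" by simp
  qed
  have "M \<notin> D"
  proof
    assume "M \<in> D"
    with \<open>M \<in> ?U\<close> have "Suc M \<in> ?U"
      using gap_count_le_Suc_if_mem[of M D L] by simp
    with U show False by simp
  qed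
  then show ?thesis using that[OF U] by simp
qed

lemma card_gap_count_ge_generators_eq:
  assumes "\<forall>x\<in>D. x + n \<in> D" "\<forall>x\<in>D. x + (n + 1) \<in> D" and "finite (- D)" and "0 < k"
  shows "card {a \<in> generators D (n + 1). k \<le> gap_count D n a}
       = card {b \<in> generators D n. k \<le> gap_count D n b}"
proof -
  obtain T where T: "{x. k \<le> gap_count D n x} = {..<T}" and "T = 0 \<or> T - 1 \<notin> D"
    using gap_count_ge_eq_lessThan[OF assms(1,3,4)] .
  then have "card {a \<in> generators D (n + 1). a < T} = card {b \<in> generators D n. b < T}"
    using card_generators_below_eq[OF assms(1,2)] by blast
  moreover have "k \<le> gap_count D n x \<longleftrightarrow> x < T" for x
    using T by blast
  ultimately show ?thesis by simp
qed

lemma card_level_eq_diff: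
  assumes "finite A"
  shows "card {a \<in> A. f a = v} = card {a \<in> A. v \<le> f a} - card {a \<in> A. Suc v \<le> f a}"
proof -
  have "{a \<in> A. f a = v} = {a \<in> A. v \<le> f a} - {a \<in> A. Suc v \<le> f a}" by auto
  moreover have "{a \<in> A. Suc v \<le> f a} \<subseteq> {a \<in> A. v \<le> f a}" by auto
  ultimately show ?thesis using assms by (simp add: card_Diff_subset finite_subset)
qed

lemma card_gap_count_eq_generators_eq:
  assumes "\<forall>x\<in>D. x + n \<in> D" "\<forall>x\<in>D. x + (n + 1) \<in> D" and "finite (- D)" and "0 < v"
  shows "card {a \<in> generators D (n + 1). gap_count D n a = v}
       = card {b \<in> generators D n. gap_count D n b = v}"
  using card_gap_count_ge_generators_eq[OF assms(1-3), of v]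
    card_gap_count_ge_generators_eq[OF assms(1-3), of "Suc v"]
    card_level_eq_diff[OF finite_generators[OF assms(3)]] assms(4) by simp

lemma partition_of_rev_sort_eqI:
  assumes "mset (filter (\<lambda>h. 0 < h) xs) = mset (filter (\<lambda>h. 0 < h) ys)"
  shows "partition_of (rev (sort xs)) = partition_of (rev (sort ys))"
proof -
  have "sort (filter (\<lambda>h. 0 < h) xs) = sort (filter (\<lambda>h. 0 < h) ys)"
    by (rule properties_for_sort) (use assms in auto)
  then show ?thesis unfolding partition_of_def by (simp add: rev_filter[symmetric] filter_sort)
qed

lemma count_mset_map_sorted_list_of_set:
  assumes "finite A"
  shows "count (mset (map f (sorted_list_of_set A))) v = card {a \<in> A. f a = v}"
  using assms by (simp del: mset_map add: count_mset count_list_eq_length_filter filter_map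
      distinct_length_filter Collect_conj_eq Int_commute eq_commute)

lemma partition_of_young_eqI:
  assumes "finite A" "finite B" and "\<And>v. 0 < v \<Longrightarrow> card {a \<in> A. f a = v} = card {b \<in> B. g b = v}"
  shows "partition_of (rev (sort (map f (sorted_list_of_set A))))
       = partition_of (rev (sort (map g (sorted_list_of_set B))))"
proof (rule partition_of_rev_sort_eqI, rule multiset_eqI)
  fix v
  show "count (mset (filter (\<lambda>h. 0 < h) (map f (sorted_list_of_set A)))) v
      = count (mset (filter (\<lambda>h. 0 < h) (map g (sorted_list_of_set B)))) v"
    using assms count_mset_map_sorted_list_of_set[of A f v] count_mset_map_sorted_list_of_set[of B g v]
    by (simp add: mset_filter)
qed

text \<open>Its conductor: writing \<open>z = q n + r\<close> with \<open>r < n \<le> q + 1\<close>, one has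
  \<open>z = r (n + 1) + (q - r) n\<close>.\<close>
lemma mem_semigroup_gen_Suc:
  assumes "0 < n" and "n * (n - 1) \<le> z"
  shows "z \<in> semigroup_gen (n + 1) n"
proof -
  define q r where "q = z div n" and "r = z mod n"
  have z: "z = q * n + r" and "r < n" unfolding q_def r_def using assms(1) by simp_all
  have "n - 1 \<le> q"
    unfolding q_def using div_le_mono[OF assms(2), of n] assms(1) by simp
  with \<open>r < n\<close> have "r \<le> q" by simp
  with z have "z = r * (n + 1) + (q - r) * n"
    by (simp add: algebra_simps diff_mult_distrib)
  then show ?thesis unfolding semigroup_gen_def by blast
qed

lemma semimodule_closed:
  assumes "is_semimodule m n D" and "x \<in> D"
  shows "x + n \<in> D" and "x + m \<in> D"
proof -
  have "n = 0 * m + 1 * n" "m = 1 * m + 0 * n" by simp_all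
  then have "n \<in> semigroup_gen m n" "m \<in> semigroup_gen m n"
    unfolding semigroup_gen_def by blast+
  then show "x + n \<in> D" "x + m \<in> D" using assms unfolding is_semimodule_def by blast+
qed

lemma finite_compl_semimodule:
  assumes "0 < n" and "is_semimodule (n + 1) n D" and "0 \<in> D"
  shows "finite (- D)"
proof (rule finite_subset)
  show "- D \<subseteq> {..<n * (n - 1)}"
  proof
    fix z assume "z \<in> - D"
    moreover have "z \<in> D" if "n * (n - 1) \<le> z"
      using assms(2,3) mem_semigroup_gen_Suc[OF assms(1) that]
      unfolding is_semimodule_def by fastforce
    ultimately show "z \<in> {..<n * (n - 1)}" by force
  qed
qed simp

theorem mainTheorem6:
  fixes n :: nat and D :: "nat set"
  assumes "0 < n"
    and "is_semimodule (n + 1) n D"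
    and "zero_normalized D"
  shows "partition_of (G_m (n + 1) n D) = partition_of (G_n (n + 1) n D)"
proof -
  have "0 \<in> D" using assms(3) unfolding zero_normalized_def by (metis LeastI ex_in_conv)
  have closed_n: "\<forall>x\<in>D. x + n \<in> D" and closed_Suc_n: "\<forall>x\<in>D. x + (n + 1) \<in> D"
    using semimodule_closed[OF assms(2)] by auto
  have cofinite: "finite (- D)" using finite_compl_semimodule[OF assms(1,2) \<open>0 \<in> D\<close>] .
  have "gap_count D (n + 1) b = gap_count D n b" if "b \<in> generators D n" for b
    using that closed_n gap_count_Suc_window[of b n D] unfolding generators_def by simp
  then have "{b \<in> generators D n. gap_count D (n + 1) b = v}
           = {b \<in> generators D n. gap_count D n b = v}" for v
    by auto
  then show ?thesis
    unfolding G_m_def G_n_def young_diagram_def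
    using card_gap_count_eq_generators_eq[OF closed_n closed_Suc_n cofinite]
    by (intro partition_of_young_eqI finite_generators[OF cofinite]) simp_all
qed

end
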